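(* Let $\mathcal{H}$ be a finite-dimensional Hilbert space, $\mathcal{O}\in\mathcal{L}(\mathcal{H})$ Hermitian, and $n\geq 1$. For $1\leq k\leq n$ define \[\mathcal{O}_k=\frac{1}{n!}\sum_{\pi\in\mathfrak{S}_n}U_\pi\,U_{s_k}\,(\mathcal{O}\otimes I^{\otimes n-1})\,U_\pi^\dagger\in\mathcal{L}(\mathcal{H}^{\otimes n}).\] Then for any $1\leq i\leq j\leq n$, $\mathcal{O}_i\mathcal{O}_j=\mathcal{O}_j\mathcal{O}_i$.
   Context: $\mathfrak{S}_n$ is the symmetric group on $\{1,\ldots,n\}$. For $\pi\in\mathfrak{S}_n$, $U_\pi$ is the unitary on $\mathcal{H}^{\otimes n}$ with $U_\pi\ket{\psi_1}\cdots\ket{\psi_n}=\ket{\psi_{\pi^{-1}(1)}}\cdots\ket{\psi_{\pi^{-1}(n)}}$. $s_k\in\mathfrak{S}_n$ is the cyclic shift on the first $k$ elements: $s_k(i)=i+1$ for $i<k$, $s_k(k)=1$, and $s_k(i)=i$ for $k<i\leq n$. *)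

theory Defs
  imports Complex_Main "HOL-Combinatorics.Permutations"
begin

text \<open>Model: H = C^d with its standard orthonormal basis e_0..e_(d-1).
  A basis vector of H^(tensor n) is a tuple x, represented as a function nat => nat with
  x i < d for i < n and x i = 0 for i >= n. An operator on H^(tensor n) is given by its
  matrix entries A y x = <e_y, A e_x>. Positions are 0-based (position i here is
  position i+1 of the paper).\<close>

type_synonym tensor_op = "(nat \<Rightarrow> nat) \<Rightarrow> (nat \<Rightarrow> nat) \<Rightarrow> complex"

definition tuples :: "nat \<Rightarrow> nat \<Rightarrow> (nat \<Rightarrow> nat) set" where
  "tuples n d = {x. (\<forall>i<n. x i < d) \<and> (\<forall>i. n \<le> i \<longrightarrow> x i = 0)}"

definition op_mult :: "nat \<Rightarrow> nat \<Rightarrow> tensor_op \<Rightarrow> tensor_op \<Rightarrow> tensor_op" where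
  "op_mult n d A B = (\<lambda>y x. \<Sum>z\<in>tuples n d. A y z * B z x)"

definition op_adj :: "tensor_op \<Rightarrow> tensor_op" where
  "op_adj A = (\<lambda>y x. cnj (A x y))"

definition perm_op :: "(nat \<Rightarrow> nat) \<Rightarrow> tensor_op" where
  "perm_op \<pi> = (\<lambda>y x. if y = x \<circ> inv \<pi> then 1 else 0)"

definition cyc_shift :: "nat \<Rightarrow> nat \<Rightarrow> nat" where
  "cyc_shift k i = (if i + 1 < k then i + 1 else if i + 1 = k then 0 else i)"

definition first_op :: "nat \<Rightarrow> (nat \<Rightarrow> nat \<Rightarrow> complex) \<Rightarrow> tensor_op" where
  "first_op n Obs = (\<lambda>y x. Obs (y 0) (x 0) * (if \<forall>i\<in>{1..<n}. y i = x i then 1 else 0))"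

definition hermitian_mat :: "nat \<Rightarrow> (nat \<Rightarrow> nat \<Rightarrow> complex) \<Rightarrow> bool" where
  "hermitian_mat d Obs = (\<forall>a<d. \<forall>b<d. Obs a b = cnj (Obs b a))"

definition sym_op :: "nat \<Rightarrow> nat \<Rightarrow> (nat \<Rightarrow> nat \<Rightarrow> complex) \<Rightarrow> nat \<Rightarrow> tensor_op" where
  "sym_op n d Obs k = (\<lambda>y x. (1 / of_nat (fact n)) *
     (\<Sum>\<pi>\<in>{\<pi>. \<pi> permutes {..<n}}.
        op_mult n d (op_mult n d (op_mult n d (perm_op \<pi>) (perm_op (cyc_shift k)))
                                  (first_op n Obs)) (op_adj (perm_op \<pi>)) y x))"

end

(*
  Write O^(a) for O acting on tensor factor a. Conjugating by U_pi gives
  U_pi U_(s_k) O^(1) U_pi^dagger = U_(pi s_k pi^-1) O^(pi 1), and a product of two such terms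
  is again of the form U_rho O^(a) O^(b). Reindexing the double sum over permutations writes
  O_k O_l as a sum over sigma of class sums C(rho, a, b) = sum_pi U_(pi rho pi^-1) O^(pi a) O^(pi b)
  with rho = s_k sigma s_l sigma^-1. A class sum does not change under simultaneous conjugation of
  rho, a and b, under swapping a and b, and under replacing rho by rho^-1: some involution
  conjugates rho to rho^-1 while fixing or swapping a and b (reflect each cycle of rho).
  Hence C(rho, a, b) = C(rho^-1, rho b, rho a). Since a reflection r_k fixing the first position
  conjugates s_k to s_k^-1, the substitution sigma |-> s_l r_l sigma^-1 s_k r_k turns the sum
  for O_k O_l into the sum for O_l O_k.
*)
theory Submission
  imports Defs "HOL-Library.FuncSet" "HOL-Combinatorics.Cycles"
begin

section \<open>Conjugating a permutation to its inverse\<close>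

lemma permutesI_inverse:
  assumes "\<And>x. f (g x) = x" and "\<And>x. g (f x) = x" and "\<And>x. x \<notin> S \<Longrightarrow> f x = x"
  shows "f permutes S"
  unfolding permutes_def using assms by metis

lemma conj_permutes: "\<pi> permutes S \<Longrightarrow> \<rho> permutes S \<Longrightarrow> \<pi> \<circ> \<rho> \<circ> inv \<pi> permutes S"
  by (intro permutes_compose permutes_inv)

locale periodic_map =
  fixes \<rho> :: "'a \<Rightarrow> 'a" and N :: nat
  assumes period_pos: "0 < N" and funpow_period: "\<rho> ^^ N = id"
begin

definition ipow :: "int \<Rightarrow> 'a \<Rightarrow> 'a" where
  "ipow z = \<rho> ^^ nat (z mod int N)"

lemma funpow_mod_period: "\<rho> ^^ (m mod N) = \<rho> ^^ m"
proof -
  have "\<rho> ^^ m = \<rho> ^^ (m mod N) \<circ> (\<rho> ^^ N) ^^ (m div N)"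
    by (simp add: funpow_mult funpow_add[symmetric])
  then show ?thesis
    by (simp add: funpow_period)
qed

lemma ipow_add: "ipow (z + w) x = ipow z (ipow w x)"
proof -
  have "int (nat ((z + w) mod int N) mod N) = int ((nat (z mod int N) + nat (w mod int N)) mod N)"
    using period_pos by (simp add: of_nat_mod mod_add_eq)
  then have "\<rho> ^^ nat ((z + w) mod int N) = \<rho> ^^ (nat (z mod int N) + nat (w mod int N))"
    by (metis funpow_mod_period of_nat_eq_iff)
  then show ?thesis
    by (simp add: ipow_def funpow_add)
qed

lemma ipow_0 [simp]: "ipow 0 x = x"
  by (simp add: ipow_def)

lemma ipow_1: "ipow 1 = \<rho>"
  using funpow_mod_period[of 1] by (simp add: ipow_def nat_mod_distrib)

lemma ipow_minus_1: "ipow (-1) = inv \<rho>"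
proof (rule sym, rule inv_equality)
  show "ipow (-1) (\<rho> x) = x" for x
    using ipow_add[of "-1" 1] by (simp add: ipow_1)
  show "\<rho> (ipow (-1) x) = x" for x
    using ipow_add[of 1 "-1"] by (simp add: ipow_1)
qed

lemma ipow_fixpoint: "\<rho> x = x \<Longrightarrow> ipow z x = x"
proof -
  assume "\<rho> x = x"
  then have "(\<rho> ^^ m) x = x" for m
    by (induction m) simp_all
  then show ?thesis
    by (simp add: ipow_def)
qed

definition same_orbit :: "'a \<Rightarrow> 'a \<Rightarrow> bool" where
  "same_orbit x c \<longleftrightarrow> (\<exists>z. ipow z c = x)"

lemma same_orbit_refl: "same_orbit x x"
  unfolding same_orbit_def using ipow_0 by blast

lemma same_orbit_sym: "same_orbit x c \<Longrightarrow> same_orbit c x"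
  unfolding same_orbit_def by (metis ipow_0 ipow_add add.left_inverse)

lemma same_orbit_trans: "same_orbit x c \<Longrightarrow> same_orbit c e \<Longrightarrow> same_orbit x e"
  unfolding same_orbit_def by (metis ipow_add)

lemma same_orbit_ipow: "same_orbit (ipow z x) x"
  unfolding same_orbit_def by blast

lemma ipow_eq_on_orbit:
  assumes "ipow z c = ipow w c" and "same_orbit x c"
  shows "ipow z x = ipow w x"
proof -
  obtain m where "ipow m c = x"
    using assms(2) by (auto simp: same_orbit_def)
  then show ?thesis
    using assms(1) by (metis ipow_add add.commute)
qed

end

locale orbit_reflection = periodic_map +
  fixes base target :: "'a \<Rightarrow> 'a"
  assumes base_same_orbit: "same_orbit x (base x)"
    and target_same_orbit: "same_orbit (target x) (base x)"
    and orbit_invariant: "same_orbit x e \<Longrightarrow> base x = base e \<and> target x = target e"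
begin

definition reflection :: "'a \<Rightarrow> 'a" where
  "reflection x = ipow (- (SOME z. ipow z (base x) = x)) (target x)"

lemma reflection_eq:
  assumes "ipow z (base x) = x"
  shows "reflection x = ipow (- z) (target x)"
proof -
  define z' where "z' = (SOME z. ipow z (base x) = x)"
  have "ipow z' (base x) = x"
    unfolding z'_def using assms by (rule someI)
  then have "ipow (- z') (base x) = ipow (- z) (base x)"
    using assms by (metis ipow_add add.commute add_minus_cancel)
  then have "ipow (- z') (target x) = ipow (- z) (target x)"
    using target_same_orbit by (rule ipow_eq_on_orbit)
  then show ?thesis
    by (simp add: reflection_def z'_def)
qed

lemma obtain_base_exponent:
  obtains z where "ipow z (base x) = x"
  using base_same_orbit unfolding same_orbit_def by blast

lemma reflection_base: "reflection (base x) = target x"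
proof -
  have "base (base x) = base x" and "target (base x) = target x"
    using orbit_invariant[OF same_orbit_sym[OF base_same_orbit]] by simp_all
  then show ?thesis
    using reflection_eq[of 0 "base x"] by simp
qed

lemma reflection_involution: "reflection (reflection x) = x"
proof -
  obtain z where z: "ipow z (base x) = x"
    by (rule obtain_base_exponent)
  obtain k where k: "ipow k (base x) = target x"
    using target_same_orbit unfolding same_orbit_def by blast
  have refl_x: "reflection x = ipow (k - z) (base x)"
    using reflection_eq[OF z] by (simp add: k[symmetric] ipow_add[symmetric])
  then have "same_orbit (reflection x) x"
    using same_orbit_trans[OF same_orbit_ipow same_orbit_sym[OF base_same_orbit]] by simp
  then have "base (reflection x) = base x" and "target (reflection x) = target x"
    using orbit_invariant by simp_all
  then have "reflection (reflection x) = ipow (z - k) (target x)"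
    using reflection_eq[of "k - z" "reflection x"] refl_x by simp
  then show ?thesis
    using z by (simp add: k[symmetric] ipow_add[symmetric])
qed

lemma reflection_comp: "reflection (\<rho> x) = inv \<rho> (reflection x)"
proof -
  obtain z where z: "ipow z (base x) = x"
    by (rule obtain_base_exponent)
  have "same_orbit (\<rho> x) x"
    unfolding same_orbit_def using ipow_1 by metis
  then have "base (\<rho> x) = base x" and "target (\<rho> x) = target x"
    using orbit_invariant by simp_all
  then have "reflection (\<rho> x) = ipow (- 1 - z) (target x)"
    using reflection_eq[of "1 + z" "\<rho> x"] z by (simp add: ipow_add ipow_1)
  also have "\<dots> = inv \<rho> (reflection x)"
    using reflection_eq[OF z] by (simp add: ipow_add[symmetric] ipow_minus_1[symmetric])
  finally show ?thesis .
qed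

lemma reflection_fixpoint:
  assumes "\<rho> x = x"
  shows "reflection x = x"
proof -
  have singleton_orbit: "e = x" if "same_orbit e x" for e
    using that ipow_fixpoint[OF assms] by (auto simp: same_orbit_def)
  have "base x = x"
    using singleton_orbit[OF same_orbit_sym[OF base_same_orbit]] .
  moreover have "target x = x"
    using singleton_orbit[OF same_orbit_trans[OF target_same_orbit same_orbit_sym[OF base_same_orbit]]] .
  ultimately show ?thesis
    using reflection_eq[of 0 x] by simp
qed

end

text \<open>Reflect every cycle of \<open>\<rho>\<close>; if \<open>a\<close> and \<open>b\<close> lie on the same cycle, reflect it so
  that they are swapped.\<close>
lemma permutes_conj_inverse:
  assumes "\<rho> permutes S" and "finite S"
  obtains g where "g permutes S" and "g \<circ> \<rho> \<circ> inv g = inv \<rho>"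
    and "g a = a \<and> g b = b \<or> g a = b \<and> g b = a"
proof -
  have "permutation \<rho>"
    using assms permutation_permutes by blast
  then obtain N where "\<rho> ^^ N = id" and "0 < N"
    by (rule permutation_is_nilpotent)
  then interpret periodic_map \<rho> N
    by unfold_locales
  define base where "base x = (if same_orbit x a then a else if same_orbit x b then b
    else (SOME c. same_orbit x c))" for x
  define target where "target x = (if same_orbit x a \<and> same_orbit b a then b else base x)" for x
  have orbit_pred: "same_orbit x = same_orbit e" if "same_orbit x e" for x e
    using that same_orbit_sym same_orbit_trans by blast
  interpret orbit_reflection \<rho> N base target
  proof
    show "same_orbit x (base x)" for x
      using someI[of "same_orbit x" x] same_orbit_refl by (simp add: base_def)
    show "same_orbit (target x) (base x)" for x
      by (simp add: target_def base_def same_orbit_refl)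
    show "base x = base e \<and> target x = target e" if "same_orbit x e" for x e
      using orbit_pred[OF that] by (simp add: base_def target_def)
  qed
  have "reflection permutes S"
    by (rule permutesI_inverse[where g = reflection])
      (simp_all add: reflection_involution reflection_fixpoint permutes_not_in[OF assms(1)])
  moreover have "inv reflection = reflection"
    by (rule inv_equality) (simp_all add: reflection_involution)
  then have "reflection \<circ> \<rho> \<circ> inv reflection = inv \<rho>"
    by (simp add: fun_eq_iff reflection_comp reflection_involution)
  moreover have "reflection a = a \<and> reflection b = b \<or> reflection a = b \<and> reflection b = a"
  proof (cases "same_orbit b a")
    case True
    then have "reflection a = b"
      using reflection_base[of a] same_orbit_refl by (simp add: base_def target_def)
    then show ?thesis
      using reflection_involution[of a] by simp
  next
    case False
    then show ?thesis
      using reflection_base[of a] reflection_base[of b] by (simp add: base_def target_def same_orbit_refl)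
  qed
  ultimately show ?thesis
    using that by blast
qed

section \<open>Cyclic shifts\<close>

definition cyc_shift_inv :: "nat \<Rightarrow> nat \<Rightarrow> nat" where
  "cyc_shift_inv k i = (if i < k then (if i = 0 then k - 1 else i - 1) else i)"

definition cyc_reflect :: "nat \<Rightarrow> nat \<Rightarrow> nat" where
  "cyc_reflect k i = (if 0 < i \<and> i < k then k - i else i)"

lemma cyc_shift_cyc_shift_inv [simp]: "cyc_shift k (cyc_shift_inv k i) = i"
  and cyc_shift_inv_cyc_shift [simp]: "cyc_shift_inv k (cyc_shift k i) = i"
  by (auto simp: cyc_shift_def cyc_shift_inv_def)

lemma cyc_reflect_cyc_reflect [simp]: "cyc_reflect k (cyc_reflect k i) = i"
  and cyc_reflect_0 [simp]: "cyc_reflect k 0 = 0"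
  by (auto simp: cyc_reflect_def)

lemma cyc_reflect_cyc_shift [simp]: "cyc_reflect k (cyc_shift k i) = cyc_shift_inv k (cyc_reflect k i)"
  by (auto simp: cyc_shift_def cyc_shift_inv_def cyc_reflect_def)

lemma cyc_reflect_cyc_shift_inv [simp]: "cyc_reflect k (cyc_shift_inv k i) = cyc_shift k (cyc_reflect k i)"
  by (metis cyc_reflect_cyc_reflect cyc_reflect_cyc_shift cyc_shift_cyc_shift_inv)

lemma inv_cyc_shift: "inv (cyc_shift k) = cyc_shift_inv k"
  by (rule inv_equality) simp_all

lemma cyc_shift_permutes: "k \<le> n \<Longrightarrow> cyc_shift k permutes {..<n}"
  by (rule permutesI_inverse[where g = "cyc_shift_inv k"]) (simp, simp, simp add: cyc_shift_def)

lemma cyc_reflect_permutes: "k \<le> n \<Longrightarrow> cyc_reflect k permutes {..<n}"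
  by (rule permutesI_inverse[where g = "cyc_reflect k"]) (simp_all add: cyc_reflect_def)

section \<open>Operators on the tensor power\<close>

lemma tuples_lt: "x \<in> tuples n d \<Longrightarrow> m < n \<Longrightarrow> x m < d"
  and tuples_beyond: "x \<in> tuples n d \<Longrightarrow> n \<le> m \<Longrightarrow> x m = 0"
  by (auto simp: tuples_def)

lemma sum_tuples_prod:
  fixes h :: "nat \<Rightarrow> nat \<Rightarrow> 'a::comm_semiring_1"
  shows "(\<Sum>z\<in>tuples n d. \<Prod>m<n. h m (z m)) = (\<Prod>m<n. \<Sum>t<d. h m t)"
proof -
  have "(\<Prod>m<n. \<Sum>t<d. h m t) = (\<Sum>g\<in>PiE {..<n} (\<lambda>_. {..<d}). \<Prod>m<n. h m (g m))"
    by (simp add: prod_sum_PiE)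
  also have "\<dots> = (\<Sum>z\<in>tuples n d. \<Prod>m<n. h m (z m))"
    by (rule sum.reindex_bij_witness[where i = "\<lambda>z. restrict z {..<n}"
          and j = "\<lambda>g m. if m < n then g m else 0"])
       (auto simp: tuples_def PiE_def extensional_def fun_eq_iff)
  finally show ?thesis ..
qed

lemma prod_of_bool:
  "finite A \<Longrightarrow> (\<Prod>m\<in>A. of_bool (P m) :: 'a::comm_semiring_1) = of_bool (\<forall>m\<in>A. P m)"
  by (induction A rule: finite_induct) auto

lemma op_mult_cong:
  assumes "\<And>z. z \<in> tuples n d \<Longrightarrow> A y z = A' y z" and "\<And>z. z \<in> tuples n d \<Longrightarrow> B z x = B' z x"
  shows "op_mult n d A B y x = op_mult n d A' B' y x"
  unfolding op_mult_def using assms by (auto intro!: sum.cong)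

lemma op_mult_scaled_sums:
  "op_mult n d (\<lambda>y x. c * (\<Sum>p\<in>P. A p y x)) (\<lambda>y x. c' * (\<Sum>q\<in>Q. B q y x)) y x
     = c * c' * (\<Sum>p\<in>P. \<Sum>q\<in>Q. op_mult n d (A p) (B q) y x)"
proof -
  let ?T = "tuples n d"
  have "op_mult n d (\<lambda>y x. c * (\<Sum>p\<in>P. A p y x)) (\<lambda>y x. c' * (\<Sum>q\<in>Q. B q y x)) y x
      = c * c' * (\<Sum>z\<in>?T. (\<Sum>p\<in>P. A p y z) * (\<Sum>q\<in>Q. B q z x))"
    unfolding op_mult_def by (simp only: sum_distrib_left mult_ac)
  also have "(\<Sum>z\<in>?T. (\<Sum>p\<in>P. A p y z) * (\<Sum>q\<in>Q. B q z x))
      = (\<Sum>z\<in>?T. \<Sum>p\<in>P. \<Sum>q\<in>Q. A p y z * B q z x)"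
    by (simp only: sum_product)
  also have "\<dots> = (\<Sum>p\<in>P. \<Sum>z\<in>?T. \<Sum>q\<in>Q. A p y z * B q z x)"
    by (rule sum.swap)
  also have "\<dots> = (\<Sum>p\<in>P. \<Sum>q\<in>Q. \<Sum>z\<in>?T. A p y z * B q z x)"
    by (intro sum.cong refl sum.swap)
  finally show ?thesis
    by (simp only: op_mult_def)
qed

definition mat_id :: "nat \<Rightarrow> nat \<Rightarrow> complex" where
  "mat_id a b = of_bool (a = b)"

definition mat_mult :: "nat \<Rightarrow> (nat \<Rightarrow> nat \<Rightarrow> complex) \<Rightarrow> (nat \<Rightarrow> nat \<Rightarrow> complex) \<Rightarrow> nat \<Rightarrow> nat \<Rightarrow> complex" where
  "mat_mult d A B = (\<lambda>a b. \<Sum>t<d. A a t * B t b)"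

lemma mat_mult_id_left: "a < d \<Longrightarrow> mat_mult d mat_id A a b = A a b"
  by (simp add: mat_mult_def mat_id_def)

lemma mat_mult_id_right: "b < d \<Longrightarrow> mat_mult d A mat_id a b = A a b"
  by (simp add: mat_mult_def mat_id_def)

text \<open>The operator \<open>U\<^sub>\<tau> (f 0 \<otimes> \<dots> \<otimes> f (n - 1))\<close>.\<close>
definition perm_tensor_op :: "nat \<Rightarrow> (nat \<Rightarrow> nat) \<Rightarrow> (nat \<Rightarrow> nat \<Rightarrow> nat \<Rightarrow> complex) \<Rightarrow> tensor_op" where
  "perm_tensor_op n \<tau> f = (\<lambda>y x. \<Prod>m<n. f m (y (\<tau> m)) (x m))"

lemma perm_tensor_op_cong:
  assumes "\<And>m a b. m < n \<Longrightarrow> a < d \<Longrightarrow> b < d \<Longrightarrow> f m a b = g m a b"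
    and "\<tau> permutes {..<n}" and "y \<in> tuples n d" and "x \<in> tuples n d"
  shows "perm_tensor_op n \<tau> f y x = perm_tensor_op n \<tau> g y x"
  unfolding perm_tensor_op_def
  using assms permutes_in_image[OF assms(2)] by (auto intro!: prod.cong simp: tuples_lt)

lemma op_mult_perm_tensor_op:
  assumes "\<tau> permutes {..<n}" and "\<tau>' permutes {..<n}"
  shows "op_mult n d (perm_tensor_op n \<tau> f) (perm_tensor_op n \<tau>' g) y x
       = perm_tensor_op n (\<tau> \<circ> \<tau>') (\<lambda>m. mat_mult d (f (\<tau>' m)) (g m)) y x"
proof -
  have reindex: "(\<Prod>m<n. h (\<tau>' m)) = (\<Prod>m<n. h m)" for h :: "nat \<Rightarrow> complex"
    using prod.reindex_bij_betw[OF permutes_imp_bij[OF assms(2)]] .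
  have "op_mult n d (perm_tensor_op n \<tau> f) (perm_tensor_op n \<tau>' g) y x
      = (\<Sum>z\<in>tuples n d. \<Prod>m<n. f m (y (\<tau> m)) (z m) * g (inv \<tau>' m) (z m) (x (inv \<tau>' m)))"
    using reindex[of "\<lambda>m. g (inv \<tau>' m) (_ m) (x (inv \<tau>' m))"]
    by (simp add: op_mult_def perm_tensor_op_def prod.distrib permutes_inverses[OF assms(2)])
  also have "\<dots> = (\<Prod>m<n. \<Sum>t<d. f m (y (\<tau> m)) t * g (inv \<tau>' m) t (x (inv \<tau>' m)))"
    by (rule sum_tuples_prod)
  also have "\<dots> = (\<Prod>m<n. \<Sum>t<d. f (\<tau>' m) (y (\<tau> (\<tau>' m))) t * g m t (x m))"
    using reindex[of "\<lambda>m. \<Sum>t<d. f m (y (\<tau> m)) t * g (inv \<tau>' m) t (x (inv \<tau>' m))"]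
    by (simp add: permutes_inverses[OF assms(2)])
  finally show ?thesis
    by (simp add: perm_tensor_op_def mat_mult_def)
qed

lemma perm_op_eq_perm_tensor_op:
  assumes "\<pi> permutes {..<n}" and "y \<in> tuples n d" and "x \<in> tuples n d"
  shows "perm_op \<pi> y x = perm_tensor_op n \<pi> (\<lambda>_. mat_id) y x"
proof -
  have "y = x \<circ> inv \<pi> \<longleftrightarrow> (\<forall>m\<in>{..<n}. y (\<pi> m) = x m)"
  proof
    assume y_x: "\<forall>m\<in>{..<n}. y (\<pi> m) = x m"
    show "y = x \<circ> inv \<pi>"
    proof
      fix m
      show "y m = (x \<circ> inv \<pi>) m"
      proof (cases "m < n")
        case True
        then show ?thesis
          using y_x permutes_in_image[OF permutes_inv[OF assms(1)]]
          by (auto simp: permutes_inverses[OF assms(1)] dest: bspec[of _ _ "inv \<pi> m"])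
      next
        case False
        then show ?thesis
          using assms(2,3) permutes_not_in[OF permutes_inv[OF assms(1)]] by (simp add: tuples_beyond)
      qed
    qed
  qed (simp add: permutes_inverses[OF assms(1)])
  then show ?thesis
    by (simp add: perm_op_def perm_tensor_op_def mat_id_def prod_of_bool)
qed

lemma op_adj_perm_op: "\<pi> permutes S \<Longrightarrow> op_adj (perm_op \<pi>) = perm_op (inv \<pi>)"
  by (auto simp: fun_eq_iff op_adj_def perm_op_def permutes_inv_inv permutes_inverses)

definition site_op :: "(nat \<Rightarrow> nat \<Rightarrow> complex) \<Rightarrow> nat \<Rightarrow> nat \<Rightarrow> nat \<Rightarrow> nat \<Rightarrow> complex" where
  "site_op Obs a m = (if m = a then Obs else mat_id)"

lemma site_op_permute: "p permutes S \<Longrightarrow> site_op Obs a (p m) = site_op Obs (inv p a) m"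
  by (auto simp: site_op_def permutes_inverses)

lemma first_op_eq_perm_tensor_op:
  assumes "1 \<le> n"
  shows "first_op n Obs = perm_tensor_op n id (site_op Obs 0)"
proof (intro ext)
  fix y x
  have "{..<n} = insert 0 {1..<n}"
    using assms by auto
  then show "first_op n Obs y x = perm_tensor_op n id (site_op Obs 0) y x"
    by (simp add: first_op_def perm_tensor_op_def site_op_def mat_id_def prod_of_bool)
qed

lemma op_mult_perm_left:
  assumes "\<pi> permutes {..<n}" and "\<tau> permutes {..<n}" and "y \<in> tuples n d" and "x \<in> tuples n d"
  shows "op_mult n d (perm_tensor_op n \<pi> (\<lambda>_. mat_id)) (perm_tensor_op n \<tau> f) y x
       = perm_tensor_op n (\<pi> \<circ> \<tau>) f y x"
proof -
  have "op_mult n d (perm_tensor_op n \<pi> (\<lambda>_. mat_id)) (perm_tensor_op n \<tau> f) y x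
      = perm_tensor_op n (\<pi> \<circ> \<tau>) (\<lambda>m. mat_mult d mat_id (f m)) y x"
    using assms by (simp add: op_mult_perm_tensor_op)
  also have "\<dots> = perm_tensor_op n (\<pi> \<circ> \<tau>) f y x"
    using assms by (intro perm_tensor_op_cong permutes_compose) (simp_all add: mat_mult_id_left)
  finally show ?thesis .
qed

lemma op_mult_perm_op_right:
  assumes "\<pi> permutes {..<n}" and "\<tau> permutes {..<n}" and "y \<in> tuples n d" and "x \<in> tuples n d"
  shows "op_mult n d (perm_tensor_op n \<tau> f) (perm_op \<pi>) y x = perm_tensor_op n (\<tau> \<circ> \<pi>) (f \<circ> \<pi>) y x"
proof -
  have "op_mult n d (perm_tensor_op n \<tau> f) (perm_op \<pi>) y x
      = op_mult n d (perm_tensor_op n \<tau> f) (perm_tensor_op n \<pi> (\<lambda>_. mat_id)) y x"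
    using assms by (intro op_mult_cong) (simp_all add: perm_op_eq_perm_tensor_op)
  also have "\<dots> = perm_tensor_op n (\<tau> \<circ> \<pi>) (\<lambda>m. mat_mult d (f (\<pi> m)) mat_id) y x"
    using assms by (simp add: op_mult_perm_tensor_op)
  also have "\<dots> = perm_tensor_op n (\<tau> \<circ> \<pi>) (f \<circ> \<pi>) y x"
    using assms by (intro perm_tensor_op_cong permutes_compose) (simp_all add: mat_mult_id_right)
  finally show ?thesis .
qed

lemma sym_op_summand:
  assumes "\<pi> permutes {..<n}" and "k \<le> n" and "1 \<le> n" and "y \<in> tuples n d" and "x \<in> tuples n d"
  shows "op_mult n d (op_mult n d (op_mult n d (perm_op \<pi>) (perm_op (cyc_shift k))) (first_op n Obs))
           (op_adj (perm_op \<pi>)) y x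
       = perm_tensor_op n (\<pi> \<circ> cyc_shift k \<circ> inv \<pi>) (site_op Obs (\<pi> 0)) y x"
proof -
  have s: "cyc_shift k permutes {..<n}"
    using assms(2) by (rule cyc_shift_permutes)
  have shift: "op_mult n d (perm_op \<pi>) (perm_op (cyc_shift k)) z w
      = perm_tensor_op n (\<pi> \<circ> cyc_shift k) (\<lambda>_. mat_id) z w"
    if "z \<in> tuples n d" and "w \<in> tuples n d" for z w
  proof -
    have "op_mult n d (perm_op \<pi>) (perm_op (cyc_shift k)) z w
        = op_mult n d (perm_tensor_op n \<pi> (\<lambda>_. mat_id)) (perm_tensor_op n (cyc_shift k) (\<lambda>_. mat_id)) z w"
      using assms(1) s that by (intro op_mult_cong) (simp_all add: perm_op_eq_perm_tensor_op)
    then show ?thesis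
      using assms(1) s that by (simp add: op_mult_perm_left)
  qed
  have shift_first: "op_mult n d (op_mult n d (perm_op \<pi>) (perm_op (cyc_shift k))) (first_op n Obs) z w
      = perm_tensor_op n (\<pi> \<circ> cyc_shift k) (site_op Obs 0) z w"
    if "z \<in> tuples n d" and "w \<in> tuples n d" for z w
  proof -
    have "op_mult n d (op_mult n d (perm_op \<pi>) (perm_op (cyc_shift k))) (first_op n Obs) z w
        = op_mult n d (perm_tensor_op n (\<pi> \<circ> cyc_shift k) (\<lambda>_. mat_id)) (perm_tensor_op n id (site_op Obs 0)) z w"
      using assms(3) by (intro op_mult_cong) (simp_all add: shift that first_op_eq_perm_tensor_op)
    then show ?thesis
      using assms(1) s that by (simp add: op_mult_perm_left permutes_compose)
  qed
  have "op_mult n d (op_mult n d (op_mult n d (perm_op \<pi>) (perm_op (cyc_shift k))) (first_op n Obs))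
           (op_adj (perm_op \<pi>)) y x
      = op_mult n d (perm_tensor_op n (\<pi> \<circ> cyc_shift k) (site_op Obs 0)) (perm_op (inv \<pi>)) y x"
    using assms(1) by (intro op_mult_cong) (simp_all add: shift_first assms(4) op_adj_perm_op)
  also have "\<dots> = perm_tensor_op n (\<pi> \<circ> cyc_shift k \<circ> inv \<pi>) (site_op Obs 0 \<circ> inv \<pi>) y x"
    using assms s by (simp add: op_mult_perm_op_right permutes_compose permutes_inv)
  also have "site_op Obs 0 \<circ> inv \<pi> = site_op Obs (\<pi> 0)"
    using assms(1) by (simp add: fun_eq_iff site_op_permute[OF permutes_inv] permutes_inv_inv)
  finally show ?thesis .
qed

lemma sym_op_eq_sum:
  assumes "k \<le> n" and "1 \<le> n" and "y \<in> tuples n d" and "x \<in> tuples n d"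
  shows "sym_op n d Obs k y x = (1 / of_nat (fact n)) *
    (\<Sum>\<pi>\<in>{\<pi>. \<pi> permutes {..<n}}. perm_tensor_op n (\<pi> \<circ> cyc_shift k \<circ> inv \<pi>) (site_op Obs (\<pi> 0)) y x)"
  unfolding sym_op_def using assms by (intro arg_cong[where f = "(*) _"] sum.cong) (simp_all add: sym_op_summand)

section \<open>Class sums\<close>

definition marked_op :: "nat \<Rightarrow> (nat \<Rightarrow> nat \<Rightarrow> complex) \<Rightarrow> nat \<Rightarrow> nat \<Rightarrow> nat \<Rightarrow> nat \<Rightarrow> nat \<Rightarrow> complex" where
  "marked_op d Obs a b m = mat_mult d (site_op Obs a m) (site_op Obs b m)"

definition class_sum :: "nat \<Rightarrow> nat \<Rightarrow> (nat \<Rightarrow> nat \<Rightarrow> complex) \<Rightarrow> (nat \<Rightarrow> nat) \<Rightarrow> nat \<Rightarrow> nat \<Rightarrow> tensor_op" where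
  "class_sum n d Obs \<rho> a b = (\<lambda>y x. \<Sum>\<pi>\<in>{\<pi>. \<pi> permutes {..<n}}.
     perm_tensor_op n (\<pi> \<circ> \<rho> \<circ> inv \<pi>) (marked_op d Obs (\<pi> a) (\<pi> b)) y x)"

lemma op_mult_site_ops:
  assumes "p permutes {..<n}" and "p' permutes {..<n}"
  shows "op_mult n d (perm_tensor_op n p (site_op Obs u)) (perm_tensor_op n p' (site_op Obs u')) y x
       = perm_tensor_op n (p \<circ> p') (marked_op d Obs (inv p' u) u') y x"
  using assms by (simp add: op_mult_perm_tensor_op site_op_permute marked_op_def[abs_def])

definition product_class_sum :: "nat \<Rightarrow> nat \<Rightarrow> (nat \<Rightarrow> nat \<Rightarrow> complex) \<Rightarrow> nat \<Rightarrow> nat \<Rightarrow> (nat \<Rightarrow> nat) \<Rightarrow> tensor_op" where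
  "product_class_sum n d Obs k l \<sigma> = class_sum n d Obs (cyc_shift k \<circ> \<sigma> \<circ> cyc_shift l \<circ> inv \<sigma>)
     (\<sigma> (inv (cyc_shift l) (inv \<sigma> 0))) (\<sigma> 0)"

lemma op_mult_sym_op:
  assumes "k \<le> n" and "l \<le> n" and "1 \<le> n" and "y \<in> tuples n d" and "x \<in> tuples n d"
  shows "op_mult n d (sym_op n d Obs k) (sym_op n d Obs l) y x
       = (1 / of_nat (fact n)) * (1 / of_nat (fact n)) *
         (\<Sum>\<sigma>\<in>{\<sigma>. \<sigma> permutes {..<n}}. product_class_sum n d Obs k l \<sigma> y x)"
proof -
  let ?P = "{\<pi>. \<pi> permutes {..<n}}"
  let ?c = "1 / of_nat (fact n) :: complex"
  define G where "G k \<pi> = perm_tensor_op n (\<pi> \<circ> cyc_shift k \<circ> inv \<pi>) (site_op Obs (\<pi> 0))" for k \<pi>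
  have sk: "cyc_shift k permutes {..<n}" and sl: "cyc_shift l permutes {..<n}"
    using assms(1,2) by (simp_all add: cyc_shift_permutes)
  have summand: "op_mult n d (G k \<pi>) (G l (\<pi> \<circ> \<sigma>)) y x
      = perm_tensor_op n (\<pi> \<circ> (cyc_shift k \<circ> \<sigma> \<circ> cyc_shift l \<circ> inv \<sigma>) \<circ> inv \<pi>)
          (marked_op d Obs (\<pi> (\<sigma> (inv (cyc_shift l) (inv \<sigma> 0)))) (\<pi> (\<sigma> 0))) y x"
    if \<pi>: "\<pi> permutes {..<n}" and \<sigma>: "\<sigma> permutes {..<n}" for \<pi> \<sigma>
  proof -
    have \<pi>\<sigma>: "\<pi> \<circ> \<sigma> permutes {..<n}"
      using \<sigma> \<pi> by (rule permutes_compose)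
    have inv_\<pi>\<sigma>: "inv (\<pi> \<circ> \<sigma>) = inv \<sigma> \<circ> inv \<pi>"
      using \<pi> \<sigma> by (simp add: o_inv_distrib permutes_bij)
    have p': "\<pi> \<circ> \<sigma> \<circ> cyc_shift l \<circ> inv (\<pi> \<circ> \<sigma>) permutes {..<n}"
      using \<pi>\<sigma> sl by (rule conj_permutes)
    have "inv (\<pi> \<circ> \<sigma> \<circ> cyc_shift l \<circ> inv (\<pi> \<circ> \<sigma>)) (\<pi> 0) = \<pi> (\<sigma> (inv (cyc_shift l) (inv \<sigma> 0)))"
      unfolding permutes_inv_eq[OF p'] using \<pi> \<sigma> sl by (simp add: inv_\<pi>\<sigma> permutes_inverses)
    moreover have "(\<pi> \<circ> cyc_shift k \<circ> inv \<pi>) \<circ> (\<pi> \<circ> \<sigma> \<circ> cyc_shift l \<circ> inv (\<pi> \<circ> \<sigma>))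
        = \<pi> \<circ> (cyc_shift k \<circ> \<sigma> \<circ> cyc_shift l \<circ> inv \<sigma>) \<circ> inv \<pi>"
      using \<pi> by (simp add: fun_eq_iff inv_\<pi>\<sigma> permutes_inverses)
    ultimately show ?thesis
      unfolding G_def using conj_permutes[OF \<pi> sk] p'
      by (simp add: op_mult_site_ops)
  qed
  have "op_mult n d (sym_op n d Obs k) (sym_op n d Obs l) y x
      = op_mult n d (\<lambda>y x. ?c * (\<Sum>\<pi>\<in>?P. G k \<pi> y x)) (\<lambda>y x. ?c * (\<Sum>\<pi>\<in>?P. G l \<pi> y x)) y x"
    using assms by (intro op_mult_cong) (simp_all add: sym_op_eq_sum G_def)
  also have "\<dots> = ?c * ?c * (\<Sum>\<pi>\<in>?P. \<Sum>\<pi>'\<in>?P. op_mult n d (G k \<pi>) (G l \<pi>') y x)"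
    by (rule op_mult_scaled_sums)
  also have "\<dots> = ?c * ?c * (\<Sum>\<pi>\<in>?P. \<Sum>\<sigma>\<in>?P. op_mult n d (G k \<pi>) (G l (\<pi> \<circ> \<sigma>)) y x)"
  proof (rule arg_cong[where f = "(*) _"], rule sum.cong[OF refl])
    fix \<pi> assume "\<pi> \<in> ?P"
    then show "(\<Sum>\<pi>'\<in>?P. op_mult n d (G k \<pi>) (G l \<pi>') y x) = (\<Sum>\<sigma>\<in>?P. op_mult n d (G k \<pi>) (G l (\<pi> \<circ> \<sigma>)) y x)"
      using setum_permutations_compose_left[of \<pi> "{..<n}" "\<lambda>\<pi>'. op_mult n d (G k \<pi>) (G l \<pi>') y x"]
      by simp
  qed
  also have "\<dots> = ?c * ?c * (\<Sum>\<pi>\<in>?P. \<Sum>\<sigma>\<in>?P.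
      perm_tensor_op n (\<pi> \<circ> (cyc_shift k \<circ> \<sigma> \<circ> cyc_shift l \<circ> inv \<sigma>) \<circ> inv \<pi>)
        (marked_op d Obs (\<pi> (\<sigma> (inv (cyc_shift l) (inv \<sigma> 0)))) (\<pi> (\<sigma> 0))) y x)"
    by (intro arg_cong[where f = "(*) _"] sum.cong refl) (simp add: summand)
  also have "\<dots> = ?c * ?c * (\<Sum>\<sigma>\<in>?P. product_class_sum n d Obs k l \<sigma> y x)"
    unfolding product_class_sum_def class_sum_def by (subst sum.swap) (rule refl)
  finally show ?thesis .
qed

lemma class_sum_conj:
  assumes "g permutes {..<n}"
  shows "class_sum n d Obs (g \<circ> \<rho> \<circ> inv g) (g a) (g b) = class_sum n d Obs \<rho> a b"
proof (intro ext)
  fix y x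
  define T where "T \<pi> = perm_tensor_op n (\<pi> \<circ> \<rho> \<circ> inv \<pi>) (marked_op d Obs (\<pi> a) (\<pi> b)) y x" for \<pi>
  have "class_sum n d Obs (g \<circ> \<rho> \<circ> inv g) (g a) (g b) y x = (\<Sum>\<pi>\<in>{\<pi>. \<pi> permutes {..<n}}. T (\<pi> \<circ> g))"
    unfolding class_sum_def T_def
  proof (intro sum.cong refl)
    fix \<pi> assume "\<pi> \<in> {\<pi>. \<pi> permutes {..<n}}"
    then have "inv (\<pi> \<circ> g) = inv g \<circ> inv \<pi>"
      using assms by (simp add: o_inv_distrib permutes_bij)
    then show "perm_tensor_op n (\<pi> \<circ> (g \<circ> \<rho> \<circ> inv g) \<circ> inv \<pi>) (marked_op d Obs (\<pi> (g a)) (\<pi> (g b))) y x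
        = perm_tensor_op n (\<pi> \<circ> g \<circ> \<rho> \<circ> inv (\<pi> \<circ> g)) (marked_op d Obs ((\<pi> \<circ> g) a) ((\<pi> \<circ> g) b)) y x"
      by (simp add: o_assoc)
  qed
  also have "\<dots> = class_sum n d Obs \<rho> a b y x"
    unfolding class_sum_def T_def by (rule sum_permutations_compose_right[OF assms, symmetric])
  finally show "class_sum n d Obs (g \<circ> \<rho> \<circ> inv g) (g a) (g b) y x = class_sum n d Obs \<rho> a b y x" .
qed

lemma marked_op_swap: "a' < d \<Longrightarrow> b' < d \<Longrightarrow> marked_op d Obs u v m a' b' = marked_op d Obs v u m a' b'"
  by (auto simp: marked_op_def site_op_def mat_mult_id_left mat_mult_id_right)

lemma class_sum_swap:
  assumes "\<rho> permutes {..<n}" and "y \<in> tuples n d" and "x \<in> tuples n d"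
  shows "class_sum n d Obs \<rho> a b y x = class_sum n d Obs \<rho> b a y x"
  unfolding class_sum_def
  using assms conj_permutes[OF _ assms(1)]
  by (intro sum.cong refl perm_tensor_op_cong) (simp_all add: marked_op_swap)

lemma class_sum_inverse:
  assumes "\<rho> permutes {..<n}" and "y \<in> tuples n d" and "x \<in> tuples n d"
  shows "class_sum n d Obs (inv \<rho>) a b y x = class_sum n d Obs \<rho> a b y x"
proof -
  obtain g where g: "g permutes {..<n}" and conj: "g \<circ> \<rho> \<circ> inv g = inv \<rho>"
    and marks: "g a = a \<and> g b = b \<or> g a = b \<and> g b = a"
    using assms(1) finite_lessThan by (rule permutes_conj_inverse)
  show ?thesis
    using marks
  proof
    assume "g a = a \<and> g b = b"
    then show ?thesis
      using class_sum_conj[OF g, of d Obs \<rho> a b] conj by simp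
  next
    assume "g a = b \<and> g b = a"
    then have "class_sum n d Obs (inv \<rho>) a b = class_sum n d Obs \<rho> b a"
      using class_sum_conj[OF g, of d Obs \<rho> b a] conj by simp
    then show ?thesis
      using class_sum_swap[OF assms] by simp
  qed
qed

lemma class_sum_reverse:
  assumes "\<rho> permutes {..<n}" and "y \<in> tuples n d" and "x \<in> tuples n d"
  shows "class_sum n d Obs (inv \<rho>) (\<rho> b) (\<rho> a) y x = class_sum n d Obs \<rho> a b y x"
proof -
  have "\<rho> \<circ> inv \<rho> \<circ> inv \<rho> = inv \<rho>"
    using permutes_inv_o(1)[OF assms(1)] by simp
  then have "class_sum n d Obs (inv \<rho>) (\<rho> b) (\<rho> a) y x = class_sum n d Obs (inv \<rho>) b a y x"
    using class_sum_conj[OF assms(1), of d Obs "inv \<rho>" b a] by simp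
  also have "\<dots> = class_sum n d Obs \<rho> b a y x"
    using assms by (rule class_sum_inverse)
  also have "\<dots> = class_sum n d Obs \<rho> a b y x"
    using assms by (rule class_sum_swap)
  finally show ?thesis .
qed

text \<open>Works because \<open>cyc_reflect k\<close> fixes \<open>0\<close> and conjugates \<open>cyc_shift k\<close> to its inverse.\<close>
lemma product_class_sum_reflect:
  assumes "k \<le> n" and "l \<le> n" and \<sigma>: "\<sigma> permutes {..<n}"
    and "y \<in> tuples n d" and "x \<in> tuples n d"
  shows "product_class_sum n d Obs l k (cyc_shift l \<circ> cyc_reflect l \<circ> inv \<sigma> \<circ> cyc_shift k \<circ> cyc_reflect k) y x
       = product_class_sum n d Obs k l \<sigma> y x"
proof -
  define \<tau> where "\<tau> = cyc_shift l \<circ> cyc_reflect l \<circ> inv \<sigma> \<circ> cyc_shift k \<circ> cyc_reflect k"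
  define \<rho> where "\<rho> = cyc_shift k \<circ> \<sigma> \<circ> cyc_shift l \<circ> inv \<sigma>"
  define g where "g = cyc_shift l \<circ> cyc_reflect l \<circ> inv \<sigma>"
  define \<alpha> where "\<alpha> = \<sigma> (inv (cyc_shift l) (inv \<sigma> 0))"
  define \<beta> where "\<beta> = \<sigma> 0"
  have \<sigma>_inv: "\<sigma> (inv \<sigma> i) = i" "inv \<sigma> (\<sigma> i) = i" for i
    using permutes_inverses[OF \<sigma>] by auto
  have perms: "\<rho> permutes {..<n}" "g permutes {..<n}"
    unfolding \<rho>_def g_def using assms(1,2) \<sigma>
    by (intro permutes_compose permutes_inv cyc_shift_permutes cyc_reflect_permutes; simp)+
  have inv_\<tau>: "inv \<tau> = cyc_reflect k \<circ> cyc_shift_inv k \<circ> \<sigma> \<circ> cyc_reflect l \<circ> cyc_shift_inv l"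
    by (rule inv_equality) (simp_all add: \<tau>_def \<sigma>_inv)
  have inv_\<rho>: "inv \<rho> = \<sigma> \<circ> cyc_shift_inv l \<circ> inv \<sigma> \<circ> cyc_shift_inv k"
    by (rule inv_equality) (simp_all add: \<rho>_def \<sigma>_inv)
  have inv_g: "inv g = \<sigma> \<circ> cyc_reflect l \<circ> cyc_shift_inv l"
    by (rule inv_equality) (simp_all add: g_def \<sigma>_inv)
  have "cyc_shift l \<circ> \<tau> \<circ> cyc_shift k \<circ> inv \<tau> = g \<circ> inv \<rho> \<circ> inv g"
    unfolding inv_\<tau> inv_\<rho> inv_g by (simp add: fun_eq_iff \<tau>_def g_def \<sigma>_inv)
  moreover have "\<tau> (inv (cyc_shift k) (inv \<tau> 0)) = g (\<rho> \<beta>)"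
    unfolding inv_\<tau> by (simp add: inv_cyc_shift \<tau>_def g_def \<rho>_def \<beta>_def \<sigma>_inv)
  moreover have "\<tau> 0 = g (\<rho> \<alpha>)"
    by (simp add: inv_cyc_shift \<tau>_def g_def \<rho>_def \<alpha>_def \<sigma>_inv)
  ultimately have "product_class_sum n d Obs l k \<tau> y x
      = class_sum n d Obs (g \<circ> inv \<rho> \<circ> inv g) (g (\<rho> \<beta>)) (g (\<rho> \<alpha>)) y x"
    by (simp add: product_class_sum_def)
  also have "\<dots> = class_sum n d Obs (inv \<rho>) (\<rho> \<beta>) (\<rho> \<alpha>) y x"
    using perms(2) by (simp add: class_sum_conj)
  also have "\<dots> = class_sum n d Obs \<rho> \<alpha> \<beta> y x"
    using perms(1) assms(4,5) by (rule class_sum_reverse)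
  finally show ?thesis
    by (simp add: \<tau>_def product_class_sum_def \<rho>_def \<alpha>_def \<beta>_def)
qed

lemma sum_product_class_sum_swap:
  assumes "k \<le> n" and "l \<le> n" and "y \<in> tuples n d" and "x \<in> tuples n d"
  shows "(\<Sum>\<sigma>\<in>{\<sigma>. \<sigma> permutes {..<n}}. product_class_sum n d Obs l k \<sigma> y x)
       = (\<Sum>\<sigma>\<in>{\<sigma>. \<sigma> permutes {..<n}}. product_class_sum n d Obs k l \<sigma> y x)"
proof -
  define F where "F \<sigma> = product_class_sum n d Obs l k \<sigma> y x" for \<sigma>
  define A where "A = cyc_shift l \<circ> cyc_reflect l"
  define B where "B = cyc_shift k \<circ> cyc_reflect k"
  have A: "A permutes {..<n}" and B: "B permutes {..<n}"
    unfolding A_def B_def using assms(1,2)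
    by (simp_all add: permutes_compose cyc_shift_permutes cyc_reflect_permutes)
  have "sum F {\<sigma>. \<sigma> permutes {..<n}} = (\<Sum>\<sigma>\<in>{\<sigma>. \<sigma> permutes {..<n}}. F (A \<circ> \<sigma>))"
    using A by (rule setum_permutations_compose_left)
  also have "\<dots> = (\<Sum>\<sigma>\<in>{\<sigma>. \<sigma> permutes {..<n}}. F (A \<circ> (\<sigma> \<circ> B)))"
    using B by (rule sum_permutations_compose_right)
  also have "\<dots> = (\<Sum>\<sigma>\<in>{\<sigma>. \<sigma> permutes {..<n}}. F (A \<circ> (inv \<sigma> \<circ> B)))"
    by (rule sum_permutations_inverse)
  also have "\<dots> = (\<Sum>\<sigma>\<in>{\<sigma>. \<sigma> permutes {..<n}}. product_class_sum n d Obs k l \<sigma> y x)"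
    using assms
    by (intro sum.cong refl) (simp add: F_def A_def B_def o_assoc product_class_sum_reflect)
  finally show ?thesis
    by (simp add: F_def)
qed

theorem proposition2p17:
  fixes n d :: nat and Obs :: "nat \<Rightarrow> nat \<Rightarrow> complex" and i j :: nat
  assumes "hermitian_mat d Obs" and "n \<ge> 1"
    and "1 \<le> i" and "i \<le> j" and "j \<le> n"
  shows "\<forall>y\<in>tuples n d. \<forall>x\<in>tuples n d.
           op_mult n d (sym_op n d Obs i) (sym_op n d Obs j) y x
         = op_mult n d (sym_op n d Obs j) (sym_op n d Obs i) y x"
proof (intro ballI)
  fix y x
  assume "y \<in> tuples n d" and "x \<in> tuples n d"
  moreover have "i \<le> n" and "j \<le> n"
    using assms by simp_all
  ultimately show "op_mult n d (sym_op n d Obs i) (sym_op n d Obs j) y x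
      = op_mult n d (sym_op n d Obs j) (sym_op n d Obs i) y x"
    using assms(2) by (simp add: op_mult_sym_op sum_product_class_sum_swap)
qed

end
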